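(* Let $\mathcal{M}_1=(E_1,\mathcal{B}_1)$ and $\mathcal{M}_2=(E_2,\mathcal{B}_2)$ be matroids with $E_1\cap E_2=\{p\}$, where $p$ is not a coloop of both. Let $E_1\uplus E_2=(E_1\cup E_2\cup\{p_1,p_2\})\setminus\{p\}$, where $p_i$ plays the role of $p$ in $E_i$, so that $P_{\mathcal{M}_1}\times P_{\mathcal{M}_2}\subset\mathbb{R}^{E_1\uplus E_2}$. Then the base polytope of the series connection $\mathcal{S}(\mathcal{M}_1,\mathcal{M}_2)$ is linearly isomorphic to $(P_{\mathcal{M}_1}\times P_{\mathcal{M}_2})\cap\{x\in\mathbb{R}^{E_1\uplus E_2}: x_{p_1}+x_{p_2}\le 1\}$.
   Context: For a matroid $\mathcal{M}=(E,\mathcal{B})$, the base polytope is $P_{\mathcal{M}}=\operatorname{conv}\{\mathbf{1}_B:B\in\mathcal{B}\}\subset\mathbb{R}^E$. For $\mathcal{M}_1,\mathcal{M}_2$ as in the claim, the series connection $\mathcal{S}(\mathcal{M}_1,\mathcal{M}_2)$ is the matroid on $E_1\cup E_2$ with bases $\{B_1\cup B_2: B_1\in\mathcal{B}_1, B_2\in\mathcal{B}_2, B_1\cap B_2=\emptyset\}$. *)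

theory Defs
  imports "HOL-Analysis.Analysis" "HOL-Library.Function_Algebras"
begin

text \<open>We model \<open>\<real>^E\<close> (for a finite set E of elements of type 'a) as the functions
  \<open>'a \<Rightarrow> real\<close> vanishing outside E.\<close>

instantiation "fun" :: (type, real_vector) real_vector
begin
definition scaleR_fun :: "real \<Rightarrow> ('a \<Rightarrow> 'b) \<Rightarrow> 'a \<Rightarrow> 'b"
  where "scaleR_fun r f = (\<lambda>x. r *\<^sub>R f x)"
instance
  by standard (auto simp: scaleR_fun_def fun_eq_iff scaleR_add_right scaleR_add_left)
end

definition matroid_bases :: "'a set \<Rightarrow> 'a set set \<Rightarrow> bool" where
  "matroid_bases E \<B> \<longleftrightarrow>
     finite E \<and> \<B> \<noteq> {} \<and> (\<forall>B\<in>\<B>. B \<subseteq> E) \<and>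
     (\<forall>B1\<in>\<B>. \<forall>B2\<in>\<B>. \<forall>x\<in>B1 - B2. \<exists>y\<in>B2 - B1. insert y (B1 - {x}) \<in> \<B>)"

definition coloop :: "'a set set \<Rightarrow> 'a \<Rightarrow> bool" where
  "coloop \<B> e \<longleftrightarrow> (\<forall>B\<in>\<B>. e \<in> B)"

definition indic_vec :: "'a set \<Rightarrow> 'a \<Rightarrow> real" where
  "indic_vec B = (\<lambda>e. if e \<in> B then 1 else 0)"

definition base_polytope :: "'a set set \<Rightarrow> ('a \<Rightarrow> real) set" where
  "base_polytope \<B> = convex hull (indic_vec ` \<B>)"

definition series_bases :: "'a set set \<Rightarrow> 'a set set \<Rightarrow> 'a set set" where
  "series_bases \<B>1 \<B>2 = {B1 \<union> B2 | B1 B2. B1 \<in> \<B>1 \<and> B2 \<in> \<B>2 \<and> B1 \<inter> B2 = {}}"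

text \<open>Coordinates of a point of \<open>\<real>^(E1 \<uplus> E2)\<close> seen in the copy of \<open>E_i\<close>, where
  the new element q plays the role of p: the function on \<open>E_i\<close> which reads off
  coordinate q at p and coordinate e at every other e in \<open>E_i\<close>, and is 0 outside \<open>E_i\<close>.\<close>
definition relabel_part :: "'a set \<Rightarrow> 'a \<Rightarrow> 'a \<Rightarrow> ('a \<Rightarrow> real) \<Rightarrow> 'a \<Rightarrow> real" where
  "relabel_part E p q x = (\<lambda>e. if e = p then x q else if e \<in> E then x e else 0)"

definition glued_product :: "'a set \<Rightarrow> 'a set set \<Rightarrow> 'a set \<Rightarrow> 'a set set \<Rightarrow> 'a \<Rightarrow> 'a \<Rightarrow> 'a
    \<Rightarrow> ('a \<Rightarrow> real) set" where
  "glued_product E1 \<B>1 E2 \<B>2 p p1 p2 =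
     {x. (\<forall>e. e \<notin> (E1 \<union> E2 \<union> {p1, p2}) - {p} \<longrightarrow> x e = 0) \<and>
         relabel_part E1 p p1 x \<in> base_polytope \<B>1 \<and>
         relabel_part E2 p p2 x \<in> base_polytope \<B>2}"

definition linearly_isomorphic :: "('a \<Rightarrow> real) set \<Rightarrow> ('a \<Rightarrow> real) set \<Rightarrow> bool" where
  "linearly_isomorphic P Q \<longleftrightarrow> (\<exists>f. linear f \<and> inj_on f (span P) \<and> f ` P = Q)"

end

theory Submission
  imports Defs
begin

text \<open>A base of the series connection is a union \<open>B\<^sub>1 \<union> B\<^sub>2\<close> of bases of the two matroids,
  disjoint exactly when \<open>p\<close> lies in at most one of them.  Recording \<open>B\<^sub>1\<close> and \<open>B\<^sub>2\<close> separately,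
  with \<open>p\<^sub>i\<close> standing for \<open>p \<in> B\<^sub>i\<close>, matches the vertices of \<open>P\<^sub>S\<close> with the vertex pairs of
  \<open>P\<^sub>M\<^sub>1 \<times> P\<^sub>M\<^sub>2\<close> obeying \<open>x\<^sub>p\<^sub>1 + x\<^sub>p\<^sub>2 \<le> 1\<close>; as all bases have the same size, this matching
  is the restriction of a linear map that is injective on the span of \<open>P\<^sub>S\<close>.  What remains is
  that cutting a product of 0/1-polytopes by \<open>x\<^sub>p\<^sub>1 + x\<^sub>p\<^sub>2 \<le> 1\<close> creates no new vertices.\<close>

lemma linear_fun_eval: "linear (\<lambda>f :: 'a \<Rightarrow> 'b::real_vector. f a)"
  by (rule linearI) (simp_all add: plus_fun_def scaleR_fun_def)

lemma convex_hull_coordinate_in: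
  fixes A :: "('a \<Rightarrow> real) set"
  assumes "convex S" and "\<And>y. y \<in> A \<Longrightarrow> y a \<in> S" and "x \<in> convex hull A"
  shows "x a \<in> S"
proof -
  have "convex hull A \<subseteq> (\<lambda>y. y a) -` S"
    using assms(1,2) by (intro hull_minimal convex_linear_vimage linear_fun_eval) auto
  then show ?thesis
    using assms(3) by auto
qed

lemma convex_hull_Un_convex_combination:
  fixes S T :: "'v::real_vector set"
  assumes "convex S" "S \<noteq> {}" "convex T" "T \<noteq> {}" and "x \<in> convex hull (S \<union> T)"
  obtains u s t where "0 \<le> u" "u \<le> 1" "s \<in> S" "t \<in> T" "x = u *\<^sub>R s + (1 - u) *\<^sub>R t"
proof -
  define I :: "bool set" where "I = UNIV"
  define F where "F i = (if i then S else T)" for i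
  have "convex hull \<Union>(F ` I) =
      {\<Sum>i\<in>I. c i *\<^sub>R s i | c s. (\<forall>i\<in>I. 0 \<le> c i) \<and> sum c I = 1 \<and> (\<forall>i\<in>I. s i \<in> F i)}"
    using assms(1-4) by (intro convex_hull_finite_union) (auto simp: F_def I_def)
  moreover have "\<Union>(F ` I) = S \<union> T"
    by (auto simp: F_def I_def)
  ultimately obtain c s where "x = (\<Sum>i\<in>I. c i *\<^sub>R s i)" "\<forall>i\<in>I. 0 \<le> c i" "sum c I = 1"
      "\<forall>i\<in>I. s i \<in> F i"
    using assms(5) by auto
  then show ?thesis
    using that[of "c True" "s True" "s False"] by (auto simp: I_def F_def UNIV_bool)
qed

lemma convex_hull_split_at_coordinate:
  fixes A :: "('a \<Rightarrow> real) set"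
  assumes A01: "\<And>y. y \<in> A \<Longrightarrow> y i = 0 \<or> y i = 1" and a: "a \<in> convex hull A"
  obtains a0 a1 where "a = a i *\<^sub>R a1 + (1 - a i) *\<^sub>R a0"
    and "a i \<noteq> 0 \<Longrightarrow> a1 \<in> convex hull {y \<in> A. y i = 1}"
    and "a i \<noteq> 1 \<Longrightarrow> a0 \<in> convex hull {y \<in> A. y i = 0}"
proof -
  define A0 where "A0 = {y \<in> A. y i = 0}"
  define A1 where "A1 = {y \<in> A. y i = 1}"
  have A_eq: "A = A1 \<union> A0"
    using A01 by (auto simp: A0_def A1_def)
  consider "A1 = {}" | "A0 = {}" | "A1 \<noteq> {}" "A0 \<noteq> {}"
    by blast
  then show ?thesis
  proof cases
    case 1
    then have "a \<in> convex hull A0"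
      using a A_eq by simp
    moreover from this have "a i = 0"
      using convex_hull_coordinate_in[of "{0}" A0 i a] by (auto simp: A0_def)
    ultimately show ?thesis
      using that[of a a] by (simp add: A0_def)
  next
    case 2
    then have "a \<in> convex hull A1"
      using a A_eq by simp
    moreover from this have "a i = 1"
      using convex_hull_coordinate_in[of "{1}" A1 i a] by (auto simp: A1_def)
    ultimately show ?thesis
      using that[of a a] by (simp add: A1_def)
  next
    case 3
    have "a \<in> convex hull (convex hull A1 \<union> convex hull A0)"
      using a A_eq hull_mono[OF Un_mono[OF hull_subset hull_subset], of convex A1 A0] by blast
    then obtain u s t where u: "0 \<le> u" "u \<le> 1" and s: "s \<in> convex hull A1"
        and t: "t \<in> convex hull A0" and a_eq: "a = u *\<^sub>R s + (1 - u) *\<^sub>R t"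
      using convex_hull_Un_convex_combination[of "convex hull A1" "convex hull A0" a] 3 by auto
    have "s i = 1"
      using convex_hull_coordinate_in[of "{1}" A1 i s] s by (auto simp: A1_def)
    moreover have "t i = 0"
      using convex_hull_coordinate_in[of "{0}" A0 i t] t by (auto simp: A0_def)
    ultimately have "a i = u"
      using a_eq by (simp add: scaleR_fun_def plus_fun_def)
    have "a = a i *\<^sub>R s + (1 - a i) *\<^sub>R t"
      unfolding \<open>a i = u\<close> by (rule a_eq)
    then show ?thesis
      by (rule that) (use s t in \<open>simp_all add: A0_def A1_def\<close>)
  qed
qed

lemma convex_combination3_in:
  assumes "convex S" and "0 \<le> u" "0 \<le> v" "0 \<le> w" "u + v + w = 1"
    and "u \<noteq> 0 \<Longrightarrow> x \<in> S" "v \<noteq> 0 \<Longrightarrow> y \<in> S" "w \<noteq> 0 \<Longrightarrow> z \<in> S"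
  shows "u *\<^sub>R x + v *\<^sub>R y + w *\<^sub>R z \<in> S"
proof -
  obtain q where q: "q \<in> S"
    using assms by (metis add.right_neutral zero_neq_one)
  define x' where "x' = (if u = 0 then q else x)"
  define y' where "y' = (if v = 0 then q else y)"
  define z' where "z' = (if w = 0 then q else z)"
  have "u *\<^sub>R x + v *\<^sub>R y + w *\<^sub>R z = u *\<^sub>R x' + v *\<^sub>R y' + w *\<^sub>R z'"
    by (simp add: x'_def y'_def z'_def)
  also have "\<dots> \<in> convex hull {x', y', z'}"
    unfolding convex_hull_3 using assms by blast
  also have "\<dots> \<subseteq> S"
    using assms q by (intro hull_minimal) (auto simp: x'_def y'_def z'_def)
  finally show ?thesis .
qed

text \<open>Split \<open>a\<close> and \<open>b\<close> at the cut coordinates and write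
  \<open>(a, b) = b j (a\<^sub>0, b\<^sub>1) + a i (a\<^sub>1, b\<^sub>0) + (1 - a i - b j) (a\<^sub>0, b\<^sub>0)\<close>.\<close>

lemma convex_hull_Times_cut:
  fixes A C :: "('a \<Rightarrow> real) set"
  assumes A01: "\<And>y. y \<in> A \<Longrightarrow> y i = 0 \<or> y i = 1" and C01: "\<And>y. y \<in> C \<Longrightarrow> y j = 0 \<or> y j = 1"
    and a: "a \<in> convex hull A" and b: "b \<in> convex hull C" and cut: "a i + b j \<le> 1"
  shows "(a, b) \<in> convex hull {(u, v) \<in> A \<times> C. u i = 0 \<or> v j = 0}"
    (is "_ \<in> convex hull ?V")
proof -
  have "a i \<in> {0..1}"
    by (rule convex_hull_coordinate_in[OF _ _ a]) (use A01 in force)+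
  moreover have "b j \<in> {0..1}"
    by (rule convex_hull_coordinate_in[OF _ _ b]) (use C01 in force)+
  ultimately have weights: "0 \<le> a i" "0 \<le> b j" "0 \<le> 1 - a i - b j"
    using cut by auto
  obtain a0 a1 where a_eq: "a = a i *\<^sub>R a1 + (1 - a i) *\<^sub>R a0"
    and a1: "a i \<noteq> 0 \<Longrightarrow> a1 \<in> convex hull {y \<in> A. y i = 1}"
    and a0: "a i \<noteq> 1 \<Longrightarrow> a0 \<in> convex hull {y \<in> A. y i = 0}"
    using convex_hull_split_at_coordinate[of A i a] A01 a by blast
  obtain b0 b1 where b_eq: "b = b j *\<^sub>R b1 + (1 - b j) *\<^sub>R b0"
    and b1: "b j \<noteq> 0 \<Longrightarrow> b1 \<in> convex hull {y \<in> C. y j = 1}"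
    and b0: "b j \<noteq> 1 \<Longrightarrow> b0 \<in> convex hull {y \<in> C. y j = 0}"
    using convex_hull_split_at_coordinate[of C j b] C01 b by blast
  have pair_in: "(x, y) \<in> convex hull ?V"
    if "x \<in> convex hull X" "y \<in> convex hull Y" "X \<times> Y \<subseteq> ?V" for x y X Y
  proof -
    have "(x, y) \<in> convex hull (X \<times> Y)"
      using that(1,2) by (simp add: convex_hull_Times)
    then show ?thesis
      using hull_mono[OF that(3)] by blast
  qed
  have "a = b j *\<^sub>R a0 + a i *\<^sub>R a1 + (1 - a i - b j) *\<^sub>R a0"
    by (subst a_eq) (simp add: algebra_simps)
  moreover have "b = b j *\<^sub>R b1 + a i *\<^sub>R b0 + (1 - a i - b j) *\<^sub>R b0"
    by (subst b_eq) (simp add: algebra_simps)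
  ultimately have "(a, b) = b j *\<^sub>R (a0, b1) + a i *\<^sub>R (a1, b0) + (1 - a i - b j) *\<^sub>R (a0, b0)"
    by simp
  also have "\<dots> \<in> convex hull ?V"
  proof (rule convex_combination3_in[OF convex_convex_hull])
    show "b j \<noteq> 0 \<Longrightarrow> (a0, b1) \<in> convex hull ?V"
      using weights by (intro pair_in[OF a0 b1]) auto
    show "a i \<noteq> 0 \<Longrightarrow> (a1, b0) \<in> convex hull ?V"
      using weights by (intro pair_in[OF a1 b0]) auto
    show "1 - a i - b j \<noteq> 0 \<Longrightarrow> (a0, b0) \<in> convex hull ?V"
      using weights by (intro pair_in[OF a0 b0]) auto
  qed (use weights in auto)
  finally show ?thesis .
qed

lemma matroid_bases_finite: "matroid_bases E \<B> \<Longrightarrow> B \<in> \<B> \<Longrightarrow> finite B"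
  unfolding matroid_bases_def by (meson finite_subset)

lemma matroid_bases_card_Diff:
  assumes M: "matroid_bases E \<B>" and "B1 \<in> \<B>" "B2 \<in> \<B>"
  shows "card (B2 - B1) = card (B1 - B2)"
  using assms(2)
proof (induction "card (B1 - B2)" arbitrary: B1)
  case 0
  then have "B1 - B2 = {}"
    using matroid_bases_finite[OF M] by simp
  moreover have "B2 - B1 = {}"
    using M 0 assms(3) calculation unfolding matroid_bases_def by blast
  ultimately show ?case
    by simp
next
  case (Suc n)
  have fin: "finite B1" "finite B2"
    using matroid_bases_finite[OF M] Suc.prems assms(3) by auto
  obtain x where x: "x \<in> B1 - B2"
    using Suc.hyps(2) by (metis card.empty empty_iff nat.distinct(1) subsetI subset_antisym)
  then obtain y where y: "y \<in> B2 - B1" and B': "insert y (B1 - {x}) \<in> \<B>"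
    using M Suc.prems assms(3) unfolding matroid_bases_def by blast
  have "card (B1 - B2) = Suc (card ((B1 - B2) - {x}))"
    using x fin by (intro card.remove) auto
  moreover have "insert y (B1 - {x}) - B2 = (B1 - B2) - {x}"
    using y by auto
  ultimately have "n = card (insert y (B1 - {x}) - B2)"
    using Suc.hyps(2) by simp
  then have "card (B2 - insert y (B1 - {x})) = n"
    using Suc.hyps(1)[OF _ B'] by simp
  moreover have "B2 - insert y (B1 - {x}) = (B2 - B1) - {y}"
    using x by auto
  moreover have "card (B2 - B1) = Suc (card ((B2 - B1) - {y}))"
    using y fin by (intro card.remove) auto
  ultimately show ?case
    using Suc.hyps(2) by simp
qed

lemma matroid_bases_card_eq:
  assumes M: "matroid_bases E \<B>" and "B1 \<in> \<B>" "B2 \<in> \<B>"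
  shows "card B1 = card B2"
proof -
  have "finite B1" "finite B2"
    using matroid_bases_finite[OF M] assms(2,3) by auto
  then show ?thesis
    using matroid_bases_card_Diff[OF assms] by (metis card_Int_Diff inf_commute)
qed

definition matroid_rank :: "'a set set \<Rightarrow> nat" where
  "matroid_rank \<B> = card (SOME B. B \<in> \<B>)"

lemma matroid_bases_card_rank:
  assumes "matroid_bases E \<B>" and "B \<in> \<B>"
  shows "card B = matroid_rank \<B>"
  unfolding matroid_rank_def using assms by (metis matroid_bases_card_eq someI)

lemma sum_indic_vec: "finite S \<Longrightarrow> sum (indic_vec B) S = real (card (S \<inter> B))"
  by (simp add: indic_vec_def sum.If_cases)

lemma card_Diff_singleton_add_indic_vec:
  assumes "finite B"
  shows "real (card (B - {x})) + indic_vec B x = real (card B)"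
proof (cases "x \<in> B")
  case True
  then have "card B = Suc (card (B - {x}))"
    using assms by (rule card.remove[rotated])
  then show ?thesis
    using True by (simp add: indic_vec_def)
qed (simp add: indic_vec_def)

lemma linear_relabel_part: "linear (relabel_part E p q)"
  by (rule linearI) (auto simp: relabel_part_def plus_fun_def scaleR_fun_def)

locale series_connection =
  fixes E1 E2 :: "'a set" and \<B>1 \<B>2 :: "'a set set" and p p1 p2 :: 'a
  assumes M1: "matroid_bases E1 \<B>1" and M2: "matroid_bases E2 \<B>2"
    and E1_Int_E2: "E1 \<inter> E2 = {p}"
    and p1_notin: "p1 \<notin> E1 \<union> E2" and p2_notin: "p2 \<notin> E1 \<union> E2" and p1_neq_p2: "p1 \<noteq> p2"
begin

abbreviation glued_polytope :: "('a \<Rightarrow> real) set" where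
  "glued_polytope \<equiv> glued_product E1 \<B>1 E2 \<B>2 p p1 p2 \<inter> {x. x p1 + x p2 \<le> 1}"

definition glue :: "('a \<Rightarrow> real) \<Rightarrow> ('a \<Rightarrow> real) \<Rightarrow> 'a \<Rightarrow> real" where
  "glue a b = (\<lambda>e. if e = p1 then a p else if e = p2 then b p
     else if e \<in> E1 - {p} then a e else if e \<in> E2 - {p} then b e else 0)"

definition base_pairs :: "(('a \<Rightarrow> real) \<times> ('a \<Rightarrow> real)) set" where
  "base_pairs = {(u, v) \<in> indic_vec ` \<B>1 \<times> indic_vec ` \<B>2. u p = 0 \<or> v p = 0}"

lemma bases_subset: "B \<in> \<B>1 \<Longrightarrow> B \<subseteq> E1" "B \<in> \<B>2 \<Longrightarrow> B \<subseteq> E2"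
  using M1 M2 unfolding matroid_bases_def by auto

lemma linear_glue: "linear (\<lambda>(a, b). glue a b)"
  by (rule linearI) (auto simp: glue_def plus_fun_def scaleR_fun_def split: prod.splits)

lemma relabel_part_glue:
  assumes "\<And>e. e \<notin> E1 \<Longrightarrow> a e = 0" and "\<And>e. e \<notin> E2 \<Longrightarrow> b e = 0"
  shows "relabel_part E1 p p1 (glue a b) = a" and "relabel_part E2 p p2 (glue a b) = b"
  using assms E1_Int_E2 p1_notin p2_notin p1_neq_p2
  by (auto simp: relabel_part_def glue_def fun_eq_iff)

lemma glue_relabel_part:
  assumes "\<And>e. e \<notin> (E1 \<union> E2 \<union> {p1, p2}) - {p} \<Longrightarrow> x e = 0"
  shows "glue (relabel_part E1 p p1 x) (relabel_part E2 p p2 x) = x"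
  using assms E1_Int_E2 p1_notin p2_notin p1_neq_p2
  by (auto simp: relabel_part_def glue_def fun_eq_iff)

lemma p_neq_p1_p2: "p \<noteq> p1" "p \<noteq> p2"
  using E1_Int_E2 p1_notin p2_notin by auto

lemma convex_glued_polytope: "convex glued_polytope"
proof -
  have "convex {x::'a \<Rightarrow> real. \<forall>e. e \<notin> (E1 \<union> E2 \<union> {p1, p2}) - {p} \<longrightarrow> x e = 0}"
    by (simp add: convex_def plus_fun_def scaleR_fun_def)
  moreover have "linear (\<lambda>x::'a \<Rightarrow> real. x p1 + x p2)"
    by (intro linear_compose_add linear_fun_eval)
  ultimately have "convex ({x. \<forall>e. e \<notin> (E1 \<union> E2 \<union> {p1, p2}) - {p} \<longrightarrow> x e = 0}
      \<inter> relabel_part E1 p p1 -` base_polytope \<B>1 \<inter> relabel_part E2 p p2 -` base_polytope \<B>2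
      \<inter> (\<lambda>x. x p1 + x p2) -` {..1})"
    unfolding base_polytope_def
    by (intro convex_Int convex_linear_vimage linear_relabel_part convex_convex_hull
        convex_real_interval(2))
  moreover have "glued_polytope = {x. \<forall>e. e \<notin> (E1 \<union> E2 \<union> {p1, p2}) - {p} \<longrightarrow> x e = 0}
      \<inter> relabel_part E1 p p1 -` base_polytope \<B>1 \<inter> relabel_part E2 p p2 -` base_polytope \<B>2
      \<inter> (\<lambda>x. x p1 + x p2) -` {..1}"
    unfolding glued_product_def by blast
  ultimately show ?thesis
    by simp
qed

lemma glue_base_pair_in:
  assumes "(u, v) \<in> base_pairs"
  shows "glue u v \<in> glued_polytope"
proof -
  obtain B1 B2 where B: "B1 \<in> \<B>1" "B2 \<in> \<B>2" and uv: "u = indic_vec B1" "v = indic_vec B2"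
    and cut: "u p = 0 \<or> v p = 0"
    using assms unfolding base_pairs_def by auto
  have "\<And>e. e \<notin> E1 \<Longrightarrow> u e = 0" "\<And>e. e \<notin> E2 \<Longrightarrow> v e = 0"
    using B bases_subset uv by (auto simp: indic_vec_def)
  then have "relabel_part E1 p p1 (glue u v) \<in> base_polytope \<B>1"
    and "relabel_part E2 p p2 (glue u v) \<in> base_polytope \<B>2"
    using B uv by (simp_all add: relabel_part_glue base_polytope_def hull_inc)
  moreover have "\<forall>e. e \<notin> (E1 \<union> E2 \<union> {p1, p2}) - {p} \<longrightarrow> glue u v e = 0"
    using p_neq_p1_p2 by (auto simp: glue_def)
  moreover have "glue u v p1 + glue u v p2 \<le> 1"
    using cut p1_neq_p2 by (auto simp: glue_def uv indic_vec_def)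
  ultimately show ?thesis
    by (simp add: glued_product_def)
qed

lemma glued_polytope_eq: "glued_polytope = convex hull ((\<lambda>(a, b). glue a b) ` base_pairs)"
proof
  show "convex hull ((\<lambda>(a, b). glue a b) ` base_pairs) \<subseteq> glued_polytope"
    using glue_base_pair_in by (intro hull_minimal convex_glued_polytope) auto
next
  show "glued_polytope \<subseteq> convex hull ((\<lambda>(a, b). glue a b) ` base_pairs)"
  proof
    fix x assume x: "x \<in> glued_polytope"
    define a where "a = relabel_part E1 p p1 x"
    define b where "b = relabel_part E2 p p2 x"
    have "(a, b) \<in> convex hull base_pairs"
      unfolding base_pairs_def
    proof (rule convex_hull_Times_cut)
      show "a \<in> convex hull indic_vec ` \<B>1" "b \<in> convex hull indic_vec ` \<B>2"
        using x by (auto simp: a_def b_def glued_product_def base_polytope_def)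
      show "a p + b p \<le> 1"
        using x by (simp add: a_def b_def relabel_part_def)
    qed (auto simp: indic_vec_def)
    then have "(\<lambda>(a, b). glue a b) (a, b) \<in> convex hull ((\<lambda>(a, b). glue a b) ` base_pairs)"
      by (rule in_convex_hull_linear_image[OF linear_glue])
    then have "glue a b \<in> convex hull ((\<lambda>(a, b). glue a b) ` base_pairs)"
      by simp
    moreover have "glue a b = x"
      using x unfolding a_def b_def by (intro glue_relabel_part) (auto simp: glued_product_def)
    ultimately show "x \<in> convex hull ((\<lambda>(a, b). glue a b) ` base_pairs)"
      by simp
  qed
qed

abbreviation rank1 :: nat where "rank1 \<equiv> matroid_rank \<B>1"
abbreviation rank2 :: nat where "rank2 \<equiv> matroid_rank \<B>2"

text \<open>If both ranks are 0 the division yields 0, which still satisfies \<open>share_mult\<close>.\<close>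

definition share :: real where
  "share = real rank1 / (real rank1 + real rank2)"

lemma share_mult: "share * (real rank1 + real rank2) = real rank1"
  by (cases "rank1 + rank2 = 0") (simp_all add: share_def)

lemma one_minus_share_mult: "(1 - share) * (real rank1 + real rank2) = real rank2"
  using share_mult by (simp add: left_diff_distrib)

text \<open>Every base of the series connection has \<open>rank1 + rank2\<close> elements, so on its base polytope
  the coordinate sum is constant; weighting it by \<open>share\<close> turns the affine maps
  \<open>y \<mapsto> rank1 - \<Sum>\<^bsub>E1 - {p}\<^esub> y\<close> and \<open>y \<mapsto> rank2 - \<Sum>\<^bsub>E2 - {p}\<^esub> y\<close>, which read off whether
  \<open>p\<close> lies in the \<open>\<B>1\<close>- or the \<open>\<B>2\<close>-part of a base, into linear ones.\<close>

definition embed :: "('a \<Rightarrow> real) \<Rightarrow> 'a \<Rightarrow> real" where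
  "embed y = (\<lambda>e. if e = p1 then share * sum y (E1 \<union> E2) - sum y (E1 - {p})
     else if e = p2 then (1 - share) * sum y (E1 \<union> E2) - sum y (E2 - {p})
     else if e \<in> (E1 \<union> E2) - {p} then y e else 0)"

lemma linear_embed: "linear embed"
proof (rule linearI)
  show "embed (x + y) = embed x + embed y" for x y
    by (rule ext) (simp add: embed_def sum.distrib algebra_simps)
  show "embed (c *\<^sub>R x) = c *\<^sub>R embed x" for c x
    by (rule ext) (simp add: embed_def scaleR_fun_def sum_distrib_left algebra_simps)
qed

lemma embed_indic_vec_Un:
  assumes B1: "B1 \<in> \<B>1" and B2: "B2 \<in> \<B>2" and disj: "B1 \<inter> B2 = {}"
  shows "embed (indic_vec (B1 \<union> B2)) = glue (indic_vec B1) (indic_vec B2)"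
proof -
  have sub: "B1 \<subseteq> E1" "B2 \<subseteq> E2"
    using B1 B2 bases_subset by auto
  have fin: "finite E1" "finite E2" "finite B1" "finite B2"
    using M1 M2 matroid_bases_finite[OF M1 B1] matroid_bases_finite[OF M2 B2]
    by (auto simp: matroid_bases_def)
  have "(E1 \<union> E2) \<inter> (B1 \<union> B2) = B1 \<union> B2"
    using sub by auto
  then have "sum (indic_vec (B1 \<union> B2)) (E1 \<union> E2) = real rank1 + real rank2"
    using fin disj matroid_bases_card_rank[OF M1 B1] matroid_bases_card_rank[OF M2 B2]
    by (simp add: sum_indic_vec card_Un_disjoint)
  moreover have "sum (indic_vec (B1 \<union> B2)) (E1 - {p}) + indic_vec B1 p = real rank1"
  proof -
    have "(E1 - {p}) \<inter> (B1 \<union> B2) = B1 - {p}"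
      using sub E1_Int_E2 by auto
    then show ?thesis
      using fin card_Diff_singleton_add_indic_vec[of B1 p] matroid_bases_card_rank[OF M1 B1]
      by (simp add: sum_indic_vec)
  qed
  moreover have "sum (indic_vec (B1 \<union> B2)) (E2 - {p}) + indic_vec B2 p = real rank2"
  proof -
    have "(E2 - {p}) \<inter> (B1 \<union> B2) = B2 - {p}"
      using sub E1_Int_E2 by auto
    then show ?thesis
      using fin card_Diff_singleton_add_indic_vec[of B2 p] matroid_bases_card_rank[OF M2 B2]
      by (simp add: sum_indic_vec)
  qed
  ultimately have at_p12: "embed (indic_vec (B1 \<union> B2)) e = glue (indic_vec B1) (indic_vec B2) e"
    if "e = p1 \<or> e = p2" for e
    using that share_mult one_minus_share_mult p1_neq_p2 by (auto simp: embed_def glue_def)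
  have off_p12: "embed (indic_vec (B1 \<union> B2)) e = glue (indic_vec B1) (indic_vec B2) e"
    if "e \<noteq> p1" "e \<noteq> p2" for e
    using that sub E1_Int_E2 disj by (auto simp: embed_def glue_def indic_vec_def)
  show ?thesis
  proof
    fix e
    show "embed (indic_vec (B1 \<union> B2)) e = glue (indic_vec B1) (indic_vec B2) e"
      using at_p12 off_p12 by blast
  qed
qed

lemma base_pairs_eq:
  "base_pairs = {(indic_vec B1, indic_vec B2) | B1 B2. B1 \<in> \<B>1 \<and> B2 \<in> \<B>2 \<and> B1 \<inter> B2 = {}}"
proof -
  have "B1 \<inter> B2 = {} \<longleftrightarrow> indic_vec B1 p = 0 \<or> indic_vec B2 p = 0"
    if "B1 \<in> \<B>1" "B2 \<in> \<B>2" for B1 B2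
  proof -
    have "B1 \<inter> B2 \<subseteq> {p}"
      using that bases_subset E1_Int_E2 by blast
    then show ?thesis
      by (auto simp: indic_vec_def)
  qed
  then show ?thesis
    unfolding base_pairs_def by blast
qed

lemma embed_base_polytope:
  "embed ` base_polytope (series_bases \<B>1 \<B>2) = convex hull ((\<lambda>(a, b). glue a b) ` base_pairs)"
proof -
  have "embed ` indic_vec ` series_bases \<B>1 \<B>2
      = {embed (indic_vec (B1 \<union> B2)) | B1 B2. B1 \<in> \<B>1 \<and> B2 \<in> \<B>2 \<and> B1 \<inter> B2 = {}}"
    unfolding series_bases_def by blast
  also have "\<dots> = {glue (indic_vec B1) (indic_vec B2) | B1 B2. B1 \<in> \<B>1 \<and> B2 \<in> \<B>2 \<and> B1 \<inter> B2 = {}}"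
    by (auto simp: embed_indic_vec_Un) (metis embed_indic_vec_Un)+
  also have "\<dots> = (\<lambda>(a, b). glue a b) ` base_pairs"
    unfolding base_pairs_eq by (auto simp: image_def)
  finally show ?thesis
    by (simp add: base_polytope_def convex_hull_linear_image[OF linear_embed])
qed

lemma embed_eq_0D:
  assumes supp: "\<And>e. e \<notin> E1 \<union> E2 \<Longrightarrow> y e = 0" and "embed y = 0"
  shows "y = 0"
proof -
  have coord: "embed y e = 0" for e
    using \<open>embed y = 0\<close> by simp
  have off_p: "y e = 0" if "e \<noteq> p" for e
    using coord[of e] supp[of e] that p1_notin p2_notin by (auto simp: embed_def split: if_splits)
  have "finite (E1 \<union> E2)" "p \<in> E1 \<union> E2"
    using M1 M2 E1_Int_E2 by (auto simp: matroid_bases_def)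
  then have "sum y (E1 \<union> E2) = y p"
    using off_p sum.mono_neutral_left[of "E1 \<union> E2" "{p}" y] by simp
  moreover have "sum y (E1 - {p}) = 0" "sum y (E2 - {p}) = 0"
    using off_p by simp_all
  ultimately have "share * y p = 0" "(1 - share) * y p = 0"
    using coord[of p1] coord[of p2] p1_neq_p2 by (simp_all add: embed_def)
  moreover have "y p = share * y p + (1 - share) * y p"
    by (simp add: algebra_simps)
  ultimately have "y p = 0"
    by linarith
  show ?thesis
  proof
    fix e
    show "y e = 0 e"
      using off_p \<open>y p = 0\<close> by (cases "e = p") simp_all
  qed
qed

lemma inj_on_embed: "inj_on embed (span (base_polytope (series_bases \<B>1 \<B>2)))"
proof -
  define V where "V = {y :: 'a \<Rightarrow> real. \<forall>e. e \<notin> E1 \<union> E2 \<longrightarrow> y e = 0}"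
  have "subspace V"
    by (auto simp: subspace_def V_def plus_fun_def scaleR_fun_def)
  moreover have "indic_vec ` series_bases \<B>1 \<B>2 \<subseteq> V"
    using bases_subset by (fastforce simp: V_def series_bases_def indic_vec_def)
  ultimately have "span (base_polytope (series_bases \<B>1 \<B>2)) \<subseteq> V"
    unfolding base_polytope_def
    by (intro span_minimal hull_minimal subspace_imp_convex)
  then show ?thesis
    using embed_eq_0D
    by (auto simp: linear_inj_on_iff_eq_0[OF linear_embed subspace_span] V_def)
qed

end

theorem lemma3p6:
  fixes E1 E2 :: "'a set" and \<B>1 \<B>2 :: "'a set set" and p p1 p2 :: 'a
  assumes "matroid_bases E1 \<B>1" and "matroid_bases E2 \<B>2"
    and "E1 \<inter> E2 = {p}"
    and "\<not> (coloop \<B>1 p \<and> coloop \<B>2 p)"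
    and "p1 \<notin> E1 \<union> E2" and "p2 \<notin> E1 \<union> E2" and "p1 \<noteq> p2"
  shows "linearly_isomorphic (base_polytope (series_bases \<B>1 \<B>2))
           (glued_product E1 \<B>1 E2 \<B>2 p p1 p2 \<inter> {x. x p1 + x p2 \<le> 1})"
proof -
  interpret series_connection E1 E2 \<B>1 \<B>2 p p1 p2
    using assms(1-3,5-7) by unfold_locales
  show ?thesis
    unfolding linearly_isomorphic_def
    using linear_embed inj_on_embed embed_base_polytope glued_polytope_eq by auto
qed

end
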